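(* Let $A$, $B$, $C$ be commutative $\mathbf{K}$-algebras, let $D$ and $E$ be associative $\mathbf{K}$-algebras equipped with algebra homomorphisms $\alpha\colon A\otimes B\to Z(D)$ and $\beta\colon B\otimes C\to Z(E)$ (so that $B$ acts centrally on $D$ via $b\mapsto\alpha(1\otimes b)$ and on $E$ via $b\mapsto\beta(b\otimes 1)$). Let $D\otimes_B E$ be the tensor product over $B$, which is an associative algebra. Then the fusion $D\circledast_B E$ equals $D\otimes_B E$ acting on itself by left multiplication; that is, the map $\rho\colon D\otimes_B E\to \mathrm{End}_{\mathbf{K}}(D\otimes_B E)$, $\rho(\xi)(\eta)=\xi\eta$, is an injective algebra homomorphism whose image is exactly $D\circledast_B E$.
   Context: Fusion of associative algebras: given associative $\mathbf{K}$-algebras $D$, $E$, $B$ with algebra homomorphisms $B^{\mathrm{op}}\to D$ and $B\to E$ (here $B$ is commutative, so $B^{\mathrm{op}}=B$, and the maps are the ones induced by $\alpha$ and $\beta$), the fusion $D\circledast_B E$ is the subalgebra of $\mathrm{End}_{\mathbf{K}}(D\otimes_B E)$ generated by $(D\cap (B^{\mathrm{op}})')\cup(B'\cap E)$, where $D\cap(B^{\mathrm{op}})'$ is the commutant in $D$ of the image of $B$, $B'\cap E$ is the commutant in $E$ of the image of $B$, and an element $d$ of $D$ (resp. $e$ of $E$) acts on $D\otimes_B E$ by $\delta\otimes_B\epsilon\mapsto d\delta\otimes_B\epsilon$ (resp. $\delta\otimes_B\epsilon\mapsto\delta\otimes_B e\epsilon$). *)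

theory Defs
  imports Complex_Main "HOL-Library.FuncSet"
begin

section \<open>K-algebras (the whole type is the algebra, K-structure given by a scalar action)\<close>

definition kalg :: "('k::field \<Rightarrow> 'a::ring_1 \<Rightarrow> 'a) \<Rightarrow> bool" where
  "kalg s \<longleftrightarrow> vector_space s \<and>
     (\<forall>c x y. s c (x * y) = s c x * y) \<and> (\<forall>c x y. s c (x * y) = x * s c y)"

definition alg_hom :: "('k::field \<Rightarrow> 'a::ring_1 \<Rightarrow> 'a) \<Rightarrow> ('k \<Rightarrow> 'b::ring_1 \<Rightarrow> 'b) \<Rightarrow> ('a \<Rightarrow> 'b) \<Rightarrow> bool" where
  "alg_hom s1 s2 f \<longleftrightarrow> (\<forall>x y. f (x + y) = f x + f y) \<and> (\<forall>c x. f (s1 c x) = s2 c (f x)) \<and>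
     (\<forall>x y. f (x * y) = f x * f y) \<and> f 1 = 1"

definition center :: "'a::ring_1 set" where
  "center = {z. \<forall>x. z * x = x * z}"

section \<open>Finitely supported functions (free K-vector space on D \<times> E)\<close>

definition fsupp :: "('a \<Rightarrow> 'k::zero) \<Rightarrow> 'a set" where
  "fsupp f = {p. f p \<noteq> 0}"

definition fs :: "('a \<Rightarrow> 'k::zero) set" where
  "fs = {f. finite (fsupp f)}"

definition dlt :: "'a \<Rightarrow> 'a \<Rightarrow> 'k::{zero,one}" where
  "dlt x = (\<lambda>p. if p = x then 1 else 0)"

definition fadd :: "('a \<Rightarrow> 'k::plus) \<Rightarrow> ('a \<Rightarrow> 'k) \<Rightarrow> 'a \<Rightarrow> 'k" where
  "fadd f g = (\<lambda>p. f p + g p)"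

definition fdiff :: "('a \<Rightarrow> 'k::minus) \<Rightarrow> ('a \<Rightarrow> 'k) \<Rightarrow> 'a \<Rightarrow> 'k" where
  "fdiff f g = (\<lambda>p. f p - g p)"

definition fsmul :: "'k::times \<Rightarrow> ('a \<Rightarrow> 'k) \<Rightarrow> 'a \<Rightarrow> 'k" where
  "fsmul c f = (\<lambda>p. c * f p)"

definition push :: "('a \<Rightarrow> 'b) \<Rightarrow> ('a \<Rightarrow> 'k::comm_monoid_add) \<Rightarrow> 'b \<Rightarrow> 'k" where
  "push g f = (\<lambda>x. sum f {p \<in> fsupp f. g p = x})"

text \<open>product in the free space: (d\<otimes>e)(d'\<otimes>e') = dd'\<otimes>ee', extended bilinearly\<close>
definition conv :: "('d::times \<times> 'e::times \<Rightarrow> 'k::field) \<Rightarrow> ('d \<times> 'e \<Rightarrow> 'k) \<Rightarrow> 'd \<times> 'e \<Rightarrow> 'k" where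
  "conv f g = (\<lambda>x. sum (\<lambda>(p, q). f p * g q)
      {(p, q). p \<in> fsupp f \<and> q \<in> fsupp g \<and> (fst p * fst q, snd p * snd q) = x})"

section \<open>The tensor product D \<otimes>_B E as a quotient of the free K-vector space\<close>

text \<open>Defining relations: K-bilinearity and B-balancedness, where B acts on D on the right
  via aB and on E on the left via bB.\<close>
inductive_set tens_rel ::
  "('k::field \<Rightarrow> 'd::ring_1 \<Rightarrow> 'd) \<Rightarrow> ('k \<Rightarrow> 'e::ring_1 \<Rightarrow> 'e) \<Rightarrow> ('b \<Rightarrow> 'd) \<Rightarrow> ('b \<Rightarrow> 'e)
    \<Rightarrow> ('d \<times> 'e \<Rightarrow> 'k) set"
  for sD sE aB bB where
  ladd: "fdiff (dlt (d + d', e)) (fadd (dlt (d, e)) (dlt (d', e))) \<in> tens_rel sD sE aB bB"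
| radd: "fdiff (dlt (d, e + e')) (fadd (dlt (d, e)) (dlt (d, e'))) \<in> tens_rel sD sE aB bB"
| lsc: "fdiff (dlt (sD c d, e)) (fsmul c (dlt (d, e))) \<in> tens_rel sD sE aB bB"
| rsc: "fdiff (dlt (d, sE c e)) (fsmul c (dlt (d, e))) \<in> tens_rel sD sE aB bB"
| bal: "fdiff (dlt (d * aB b, e)) (dlt (d, bB b * e)) \<in> tens_rel sD sE aB bB"

inductive_set tens_null ::
  "('k::field \<Rightarrow> 'd::ring_1 \<Rightarrow> 'd) \<Rightarrow> ('k \<Rightarrow> 'e::ring_1 \<Rightarrow> 'e) \<Rightarrow> ('b \<Rightarrow> 'd) \<Rightarrow> ('b \<Rightarrow> 'e)
    \<Rightarrow> ('d \<times> 'e \<Rightarrow> 'k) set"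
  for sD sE aB bB where
  zero: "(\<lambda>_. 0) \<in> tens_null sD sE aB bB"
| step: "r \<in> tens_rel sD sE aB bB \<Longrightarrow> f \<in> tens_null sD sE aB bB
          \<Longrightarrow> fadd (fsmul c r) f \<in> tens_null sD sE aB bB"

definition tcls :: "('a \<Rightarrow> 'k::field) set \<Rightarrow> ('a \<Rightarrow> 'k) \<Rightarrow> ('a \<Rightarrow> 'k) set" where
  "tcls N f = {g \<in> fs. fdiff g f \<in> N}"

definition tcarrier :: "('a \<Rightarrow> 'k::field) set \<Rightarrow> ('a \<Rightarrow> 'k) set set" where
  "tcarrier N = tcls N ` fs"

definition rep :: "'a set \<Rightarrow> 'a" where
  "rep X = (SOME f. f \<in> X)"

definition tadd :: "('a \<Rightarrow> 'k::field) set \<Rightarrow> ('a \<Rightarrow> 'k) set \<Rightarrow> ('a \<Rightarrow> 'k) set \<Rightarrow> ('a \<Rightarrow> 'k) set" where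
  "tadd N X Y = tcls N (fadd (rep X) (rep Y))"

definition tsc :: "('a \<Rightarrow> 'k::field) set \<Rightarrow> 'k \<Rightarrow> ('a \<Rightarrow> 'k) set \<Rightarrow> ('a \<Rightarrow> 'k) set" where
  "tsc N c X = tcls N (fsmul c (rep X))"

definition tmul :: "('d::times \<times> 'e::times \<Rightarrow> 'k::field) set \<Rightarrow> ('d \<times> 'e \<Rightarrow> 'k) set
    \<Rightarrow> ('d \<times> 'e \<Rightarrow> 'k) set \<Rightarrow> ('d \<times> 'e \<Rightarrow> 'k) set" where
  "tmul N X Y = tcls N (conv (rep X) (rep Y))"

definition tone :: "('d::one \<times> 'e::one \<Rightarrow> 'k::field) set \<Rightarrow> ('d \<times> 'e \<Rightarrow> 'k) set" where
  "tone N = tcls N (dlt (1, 1))"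

definition lin_end :: "('a \<Rightarrow> 'k::field) set \<Rightarrow> (('a \<Rightarrow> 'k) set \<Rightarrow> ('a \<Rightarrow> 'k) set) set" where
  "lin_end N = {\<phi> \<in> tcarrier N \<rightarrow>\<^sub>E tcarrier N.
      (\<forall>X\<in>tcarrier N. \<forall>Y\<in>tcarrier N. \<phi> (tadd N X Y) = tadd N (\<phi> X) (\<phi> Y)) \<and>
      (\<forall>c. \<forall>X\<in>tcarrier N. \<phi> (tsc N c X) = tsc N c (\<phi> X))}"

definition actL :: "('d::times \<times> 'e \<Rightarrow> 'k::field) set \<Rightarrow> 'd \<Rightarrow> ('d \<times> 'e \<Rightarrow> 'k) set \<Rightarrow> ('d \<times> 'e \<Rightarrow> 'k) set" where
  "actL N d = (\<lambda>X\<in>tcarrier N. tcls N (push (\<lambda>(x, y). (d * x, y)) (rep X)))"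

definition actR :: "('d \<times> 'e::times \<Rightarrow> 'k::field) set \<Rightarrow> 'e \<Rightarrow> ('d \<times> 'e \<Rightarrow> 'k) set \<Rightarrow> ('d \<times> 'e \<Rightarrow> 'k) set" where
  "actR N e = (\<lambda>X\<in>tcarrier N. tcls N (push (\<lambda>(x, y). (x, e * y)) (rep X)))"

inductive_set gen_subalg :: "('a \<Rightarrow> 'k::field) set \<Rightarrow> (('a \<Rightarrow> 'k) set \<Rightarrow> ('a \<Rightarrow> 'k) set) set
    \<Rightarrow> (('a \<Rightarrow> 'k) set \<Rightarrow> ('a \<Rightarrow> 'k) set) set"
  for N S where
  base: "\<phi> \<in> S \<Longrightarrow> \<phi> \<in> gen_subalg N S"
| one: "(\<lambda>X\<in>tcarrier N. X) \<in> gen_subalg N S"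
| add: "\<phi> \<in> gen_subalg N S \<Longrightarrow> \<psi> \<in> gen_subalg N S
          \<Longrightarrow> (\<lambda>X\<in>tcarrier N. tadd N (\<phi> X) (\<psi> X)) \<in> gen_subalg N S"
| scale: "\<phi> \<in> gen_subalg N S \<Longrightarrow> (\<lambda>X\<in>tcarrier N. tsc N c (\<phi> X)) \<in> gen_subalg N S"
| mult: "\<phi> \<in> gen_subalg N S \<Longrightarrow> \<psi> \<in> gen_subalg N S
          \<Longrightarrow> compose (tcarrier N) \<phi> \<psi> \<in> gen_subalg N S"

text \<open>Fusion D \<circledast>_B E: generated by (D \<inter> (B^op)') \<union> (B' \<inter> E).\<close>
definition fusion ::
  "('k::field \<Rightarrow> 'd::ring_1 \<Rightarrow> 'd) \<Rightarrow> ('k \<Rightarrow> 'e::ring_1 \<Rightarrow> 'e) \<Rightarrow> ('b \<Rightarrow> 'd) \<Rightarrow> ('b \<Rightarrow> 'e)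
    \<Rightarrow> (('d \<times> 'e \<Rightarrow> 'k) set \<Rightarrow> ('d \<times> 'e \<Rightarrow> 'k) set) set" where
  "fusion sD sE aB bB =
     (let N = tens_null sD sE aB bB in
      gen_subalg N (actL N ` {d. \<forall>b. d * aB b = aB b * d} \<union> actR N ` {e. \<forall>b. bB b * e = e * bB b}))"

definition lmul :: "('d::times \<times> 'e::times \<Rightarrow> 'k::field) set \<Rightarrow> ('d \<times> 'e \<Rightarrow> 'k) set
    \<Rightarrow> ('d \<times> 'e \<Rightarrow> 'k) set \<Rightarrow> ('d \<times> 'e \<Rightarrow> 'k) set" where
  "lmul N \<xi> = (\<lambda>\<eta>\<in>tcarrier N. tmul N \<xi> \<eta>)"

end

(*
  The free K-vector space on D \<times> E, with (d, e) (d', e') = (d d', e e') extended bilinearly,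
  is an associative unital algebra.  Since scalars commute with the products of D and E and
  B acts centrally on both, the span N of the bilinearity and B-balancing relations is a
  two-sided ideal.  Hence D \<otimes>\<^sub>B E is the quotient algebra, left multiplication \<rho> is an
  algebra homomorphism into End_K(D \<otimes>\<^sub>B E), and \<rho> is injective because \<rho>(\<xi>)(1 \<otimes> 1) = \<xi>.
  Centrality also makes the commutant conditions in the definition of the fusion vacuous,
  and its generators are \<rho>(d \<otimes> 1) and \<rho>(1 \<otimes> e).  As d \<otimes> e = (d \<otimes> 1)(1 \<otimes> e) and
  these elements span D \<otimes>\<^sub>B E, the image of \<rho> is the subalgebra they generate.
*)
theory Submission
  imports Defs
begin

section \<open>Finitely supported functions and their convolution\<close>

lemma fs_iff_finite: "f \<in> fs \<longleftrightarrow> finite (fsupp f)"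
  by (simp add: fs_def)

lemma fsupp_fadd: "fsupp (fadd f g) \<subseteq> fsupp f \<union> fsupp (g :: _ \<Rightarrow> 'k::monoid_add)"
  by (auto simp: fsupp_def fadd_def)

lemma fsupp_fsmul: "fsupp (fsmul c (f :: _ \<Rightarrow> 'k::mult_zero)) \<subseteq> fsupp f"
  by (auto simp: fsupp_def fsmul_def)

lemma fsupp_dlt: "fsupp (dlt a :: _ \<Rightarrow> 'k::zero_neq_one) = {a}"
  by (auto simp: fsupp_def dlt_def)

lemma fs_zero [simp]: "(\<lambda>_. 0) \<in> fs"
  by (simp add: fs_def fsupp_def)

lemma fs_dlt [simp]: "(dlt a :: _ \<Rightarrow> 'k::zero_neq_one) \<in> fs"
  by (simp add: fs_iff_finite fsupp_dlt)

lemma fs_fadd [simp]: "f \<in> fs \<Longrightarrow> g \<in> fs \<Longrightarrow> fadd f (g :: _ \<Rightarrow> 'k::monoid_add) \<in> fs"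
  using fsupp_fadd by (metis finite_Un finite_subset fs_iff_finite)

lemma fs_fsmul [simp]: "f \<in> fs \<Longrightarrow> fsmul c (f :: _ \<Rightarrow> 'k::mult_zero) \<in> fs"
  using fsupp_fsmul by (metis finite_subset fs_iff_finite)

lemma fdiff_eq_fadd_fsmul: "fdiff f g = fadd f (fsmul (-1) (g :: _ \<Rightarrow> 'k::ring_1))"
  by (simp add: fdiff_def fadd_def fsmul_def)

lemma fs_fdiff [simp]: "f \<in> fs \<Longrightarrow> g \<in> fs \<Longrightarrow> fdiff f (g :: _ \<Rightarrow> 'k::ring_1) \<in> fs"
  by (simp add: fdiff_eq_fadd_fsmul)

lemma fs_induct [consumes 1, case_names zero step]:
  fixes g :: "'a \<Rightarrow> 'k::semiring_1"
  assumes "g \<in> fs" and "P (\<lambda>_. 0)"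
    and "\<And>f a c. f \<in> fs \<Longrightarrow> P f \<Longrightarrow> P (fadd f (fsmul c (dlt a)))"
  shows "P g"
proof -
  have "P g" if "finite S" "fsupp g \<subseteq> S" for S g
    using that
  proof (induction S arbitrary: g)
    case empty
    then have "g = (\<lambda>_. 0)" by (auto simp: fsupp_def)
    then show ?case using assms(2) by simp
  next
    case (insert a S)
    define g' where "g' = (\<lambda>p. if p = a then 0 else g p)"
    have "fsupp g' \<subseteq> S" using insert.prems by (auto simp: fsupp_def g'_def)
    moreover from this have "g' \<in> fs" using insert.hyps(1) by (metis finite_subset fs_iff_finite)
    moreover have "g = fadd g' (fsmul (g a) (dlt a))"
      by (auto simp: fadd_def fsmul_def dlt_def g'_def)
    ultimately show ?case using insert.IH assms(3) by metis
  qed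
  then show ?thesis using assms(1) by (simp add: fs_iff_finite)
qed

abbreviation pair_mult :: "'d::times \<times> 'e::times \<Rightarrow> 'd \<times> 'e \<Rightarrow> 'd \<times> 'e" where
  "pair_mult p q \<equiv> (fst p * fst q, snd p * snd q)"

lemma conv_eq_sum:
  fixes f g :: "'d::times \<times> 'e::times \<Rightarrow> 'k::field"
  assumes "finite A" "finite B" "fsupp f \<subseteq> A" "fsupp g \<subseteq> B"
  shows "conv f g z = (\<Sum>p\<in>A. \<Sum>q\<in>B. f p * g q * dlt (pair_mult p q) z)"
proof -
  have fin: "finite (fsupp f \<times> fsupp g)" using assms finite_subset by blast
  have "{(p, q). p \<in> fsupp f \<and> q \<in> fsupp g \<and> pair_mult p q = z} =
      {x \<in> fsupp f \<times> fsupp g. pair_mult (fst x) (snd x) = z}" by auto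
  then have "conv f g z =
      (\<Sum>x\<in>fsupp f \<times> fsupp g. f (fst x) * g (snd x) * dlt (pair_mult (fst x) (snd x)) z)"
    unfolding conv_def using fin
    by (auto simp: sum.inter_filter case_prod_beta dlt_def intro!: sum.cong)
  also have "\<dots> = (\<Sum>x\<in>A \<times> B. f (fst x) * g (snd x) * dlt (pair_mult (fst x) (snd x)) z)"
    using assms by (intro sum.mono_neutral_left) (auto simp: fsupp_def)
  finally show ?thesis by (simp add: sum.cartesian_product case_prod_beta)
qed

lemma conv_fadd_left:
  fixes f g h :: "'d::times \<times> 'e::times \<Rightarrow> 'k::field"
  assumes "f \<in> fs" "g \<in> fs" "h \<in> fs"
  shows "conv (fadd f g) h = fadd (conv f h) (conv g h)"
proof
  fix z
  let ?A = "fsupp f \<union> fsupp g"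
  have "finite ?A" "finite (fsupp h)" using assms by (auto simp: fs_iff_finite)
  then show "conv (fadd f g) h z = fadd (conv f h) (conv g h) z"
    using fsupp_fadd[of f g]
    by (simp add: conv_eq_sum[of ?A "fsupp h"] fadd_def sum.distrib[symmetric] algebra_simps)
qed

lemma conv_fadd_right:
  fixes f g h :: "'d::times \<times> 'e::times \<Rightarrow> 'k::field"
  assumes "f \<in> fs" "g \<in> fs" "h \<in> fs"
  shows "conv h (fadd f g) = fadd (conv h f) (conv h g)"
proof
  fix z
  let ?A = "fsupp f \<union> fsupp g"
  have "finite ?A" "finite (fsupp h)" using assms by (auto simp: fs_iff_finite)
  then show "conv h (fadd f g) z = fadd (conv h f) (conv h g) z"
    using fsupp_fadd[of f g]
    by (simp add: conv_eq_sum[of "fsupp h" ?A] fadd_def sum.distrib[symmetric] algebra_simps)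
qed

lemma conv_fsmul_left:
  fixes f h :: "'d::times \<times> 'e::times \<Rightarrow> 'k::field"
  assumes "f \<in> fs" "h \<in> fs"
  shows "conv (fsmul c f) h = fsmul c (conv f h)"
proof
  fix z
  have "finite (fsupp f)" "finite (fsupp h)" using assms by (auto simp: fs_iff_finite)
  then show "conv (fsmul c f) h z = fsmul c (conv f h) z"
    using fsupp_fsmul[of c f]
    by (simp add: conv_eq_sum[of "fsupp f" "fsupp h"] fsmul_def sum_distrib_left algebra_simps)
qed

lemma conv_fsmul_right:
  fixes f h :: "'d::times \<times> 'e::times \<Rightarrow> 'k::field"
  assumes "f \<in> fs" "h \<in> fs"
  shows "conv h (fsmul c f) = fsmul c (conv h f)"
proof
  fix z
  have "finite (fsupp f)" "finite (fsupp h)" using assms by (auto simp: fs_iff_finite)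
  then show "conv h (fsmul c f) z = fsmul c (conv h f) z"
    using fsupp_fsmul[of c f]
    by (simp add: conv_eq_sum[of "fsupp h" "fsupp f"] fsmul_def sum_distrib_left algebra_simps)
qed

lemma conv_fdiff_left:
  fixes f g h :: "'d::times \<times> 'e::times \<Rightarrow> 'k::field"
  assumes "f \<in> fs" "g \<in> fs" "h \<in> fs"
  shows "conv (fdiff f g) h = fdiff (conv f h) (conv g h)"
  using assms by (simp add: fdiff_eq_fadd_fsmul conv_fadd_left conv_fsmul_left)

lemma conv_fdiff_right:
  fixes f g h :: "'d::times \<times> 'e::times \<Rightarrow> 'k::field"
  assumes "f \<in> fs" "g \<in> fs" "h \<in> fs"
  shows "conv h (fdiff f g) = fdiff (conv h f) (conv h g)"
  using assms by (simp add: fdiff_eq_fadd_fsmul conv_fadd_right conv_fsmul_right)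

lemma conv_zero_left [simp]: "conv (\<lambda>_. 0) g = (\<lambda>_. 0)"
  by (simp add: conv_def fsupp_def)

lemma conv_zero_right [simp]: "conv g (\<lambda>_. 0) = (\<lambda>_. 0)"
  by (simp add: conv_def fsupp_def)

lemma conv_dlt_dlt [simp]:
  "conv (dlt p) (dlt q) = (dlt (pair_mult p q) :: 'd::times \<times> 'e::times \<Rightarrow> 'k::field)"
  by (rule ext) (simp add: conv_eq_sum[of "{p}" "{q}"] fsupp_dlt, simp add: dlt_def)

lemma fs_conv [simp]:
  fixes f g :: "'d::times \<times> 'e::times \<Rightarrow> 'k::field"
  assumes "f \<in> fs" "g \<in> fs"
  shows "conv f g \<in> fs"
proof -
  let ?M = "(\<lambda>(p, q). pair_mult p q) ` (fsupp f \<times> fsupp g)"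
  have "conv f g z = 0" if "z \<notin> ?M" for z
  proof -
    have "{(p, q). p \<in> fsupp f \<and> q \<in> fsupp g \<and> pair_mult p q = z} = {}"
      using that by force
    then show ?thesis unfolding conv_def by (simp only: sum.empty)
  qed
  then have "fsupp (conv f g) \<subseteq> ?M" by (auto simp: fsupp_def)
  moreover have "finite ?M" using assms by (simp add: fs_iff_finite)
  ultimately show ?thesis by (simp add: fs_iff_finite finite_subset)
qed

lemma conv_unit_left:
  fixes g :: "'d::monoid_mult \<times> 'e::monoid_mult \<Rightarrow> 'k::field"
  assumes "g \<in> fs"
  shows "conv (dlt (1, 1)) g = g"
  using assms by (induction rule: fs_induct) (simp_all add: conv_fadd_right conv_fsmul_right)

lemma conv_unit_right:
  fixes g :: "'d::monoid_mult \<times> 'e::monoid_mult \<Rightarrow> 'k::field"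
  assumes "g \<in> fs"
  shows "conv g (dlt (1, 1)) = g"
  using assms by (induction rule: fs_induct) (simp_all add: conv_fadd_left conv_fsmul_left)

lemmas conv_bilinear = conv_fadd_left conv_fadd_right conv_fsmul_left conv_fsmul_right

lemma conv_assoc:
  fixes f g h :: "'d::semigroup_mult \<times> 'e::semigroup_mult \<Rightarrow> 'k::field"
  assumes "f \<in> fs" "g \<in> fs" "h \<in> fs"
  shows "conv (conv f g) h = conv f (conv g h)"
proof -
  have dlt_dlt: "conv (conv (dlt a) (dlt b)) h = conv (dlt a) (conv (dlt b) h)" for a b
    using assms(3) by (induction rule: fs_induct) (simp_all add: conv_bilinear mult.assoc)
  have dlt: "conv (conv (dlt a) g) h = conv (dlt a) (conv g h)" for a
    using assms(2) by (induction rule: fs_induct)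
      (simp_all add: conv_bilinear dlt_dlt assms(3) del: conv_dlt_dlt)
  show ?thesis
    using assms(1) by (induction rule: fs_induct)
      (simp_all add: conv_bilinear dlt assms(2,3) del: conv_dlt_dlt)
qed

lemma push_eq_conv:
  fixes g :: "'d::times \<times> 'e::times \<Rightarrow> 'k::field"
  assumes "g \<in> fs"
  shows "push (pair_mult a) g = conv (dlt a) g"
proof
  fix z
  have "finite (fsupp g)" using assms by (simp add: fs_iff_finite)
  then have "conv (dlt a) g z = (\<Sum>q\<in>fsupp g. if pair_mult a q = z then g q else 0)"
    by (simp add: conv_eq_sum[of "{a}" "fsupp g"] fsupp_dlt) (auto simp: dlt_def intro: sum.cong)
  also have "\<dots> = push (pair_mult a) g z"
    unfolding push_def using \<open>finite (fsupp g)\<close> by (simp add: sum.inter_filter)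
  finally show "push (pair_mult a) g z = conv (dlt a) g z" ..
qed

section \<open>Quotients of the free space\<close>

locale fs_subspace =
  fixes N :: "('a \<Rightarrow> 'k::field) set"
  assumes zero_mem: "(\<lambda>_. 0) \<in> N"
    and fadd_mem: "n \<in> N \<Longrightarrow> m \<in> N \<Longrightarrow> fadd n m \<in> N"
    and fsmul_mem: "n \<in> N \<Longrightarrow> fsmul c n \<in> N"
begin

lemma fdiff_mem: "n \<in> N \<Longrightarrow> m \<in> N \<Longrightarrow> fdiff n m \<in> N"
  by (simp add: fdiff_eq_fadd_fsmul fadd_mem fsmul_mem)

lemma tcls_self: "f \<in> fs \<Longrightarrow> f \<in> tcls N f"
  using zero_mem by (simp add: tcls_def fdiff_def)

lemma tcls_eqI:
  assumes "f \<in> fs" "g \<in> fs" "fdiff f g \<in> N"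
  shows "tcls N f = tcls N g"
proof -
  have "fdiff h f \<in> N \<longleftrightarrow> fdiff h g \<in> N" for h
  proof
    assume "fdiff h f \<in> N"
    moreover have "fdiff h g = fadd (fdiff h f) (fdiff f g)" by (simp add: fdiff_def fadd_def)
    ultimately show "fdiff h g \<in> N" using assms(3) by (simp add: fadd_mem)
  next
    assume "fdiff h g \<in> N"
    moreover have "fdiff h f = fdiff (fdiff h g) (fdiff f g)" by (simp add: fdiff_def)
    ultimately show "fdiff h f \<in> N" using assms(3) by (simp add: fdiff_mem)
  qed
  then show ?thesis by (auto simp: tcls_def)
qed

lemma rep_tcls:
  assumes "f \<in> fs"
  shows "rep (tcls N f) \<in> fs" "fdiff (rep (tcls N f)) f \<in> N"
proof -
  have "rep (tcls N f) \<in> tcls N f"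
    unfolding rep_def using tcls_self[OF assms] by (rule someI[where P = "\<lambda>g. g \<in> tcls N f"])
  then show "rep (tcls N f) \<in> fs" "fdiff (rep (tcls N f)) f \<in> N" by (auto simp: tcls_def)
qed

lemma tcls_rep: "f \<in> fs \<Longrightarrow> tcls N (rep (tcls N f)) = tcls N f"
  using rep_tcls tcls_eqI by blast

lemma tcls_in_tcarrier [simp]: "f \<in> fs \<Longrightarrow> tcls N f \<in> tcarrier N"
  by (simp add: tcarrier_def)

lemma tcarrierE:
  assumes "X \<in> tcarrier N"
  obtains f where "f \<in> fs" "X = tcls N f"
  using assms by (auto simp: tcarrier_def)

lemma tadd_tcls:
  assumes "f \<in> fs" "g \<in> fs"
  shows "tadd N (tcls N f) (tcls N g) = tcls N (fadd f g)"
proof -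
  let ?f = "rep (tcls N f)" and ?g = "rep (tcls N g)"
  have "fdiff (fadd ?f ?g) (fadd f g) = fadd (fdiff ?f f) (fdiff ?g g)"
    by (simp add: fdiff_def fadd_def algebra_simps)
  then show ?thesis
    unfolding tadd_def using assms by (intro tcls_eqI) (simp_all add: rep_tcls fadd_mem)
qed

lemma tsc_tcls:
  assumes "f \<in> fs"
  shows "tsc N c (tcls N f) = tcls N (fsmul c f)"
proof -
  have "fdiff (fsmul c (rep (tcls N f))) (fsmul c f) = fsmul c (fdiff (rep (tcls N f)) f)"
    by (simp add: fdiff_def fsmul_def right_diff_distrib)
  then show ?thesis
    unfolding tsc_def using assms by (intro tcls_eqI) (simp_all add: rep_tcls fsmul_mem)
qed

lemma tadd_in_tcarrier: "X \<in> tcarrier N \<Longrightarrow> Y \<in> tcarrier N \<Longrightarrow> tadd N X Y \<in> tcarrier N"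
  by (elim tcarrierE) (simp add: tadd_tcls)

lemma tsc_in_tcarrier: "X \<in> tcarrier N \<Longrightarrow> tsc N c X \<in> tcarrier N"
  by (elim tcarrierE) (simp add: tsc_tcls)

lemma tcarrier_fun_eqI:
  assumes "\<phi> \<in> extensional (tcarrier N)" "\<psi> \<in> extensional (tcarrier N)"
    and "\<And>f. f \<in> fs \<Longrightarrow> \<phi> (tcls N f) = \<psi> (tcls N f)"
  shows "\<phi> = \<psi>"
  using assms by (intro extensionalityI) (auto elim: tcarrierE)

end

locale conv_ideal = fs_subspace N
  for N :: "('d::monoid_mult \<times> 'e::monoid_mult \<Rightarrow> 'k::field) set" +
  assumes conv_mem_left: "g \<in> fs \<Longrightarrow> n \<in> N \<Longrightarrow> conv g n \<in> N"
    and conv_mem_right: "n \<in> N \<Longrightarrow> g \<in> fs \<Longrightarrow> conv n g \<in> N"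
begin

lemma tmul_tcls:
  assumes "f \<in> fs" "g \<in> fs"
  shows "tmul N (tcls N f) (tcls N g) = tcls N (conv f g)"
proof -
  let ?f = "rep (tcls N f)" and ?g = "rep (tcls N g)"
  have fs: "?f \<in> fs" "?g \<in> fs" using assms by (simp_all add: rep_tcls)
  then have "fdiff (conv ?f ?g) (conv f g) = fadd (conv (fdiff ?f f) ?g) (conv f (fdiff ?g g))"
    using assms by (simp add: conv_fdiff_left conv_fdiff_right) (simp add: fdiff_def fadd_def)
  moreover have "conv (fdiff ?f f) ?g \<in> N" "conv f (fdiff ?g g) \<in> N"
    using assms fs by (simp_all add: rep_tcls conv_mem_left conv_mem_right)
  ultimately show ?thesis
    unfolding tmul_def using assms fs by (intro tcls_eqI) (simp_all add: fadd_mem)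
qed

lemma tmul_in_tcarrier: "X \<in> tcarrier N \<Longrightarrow> Y \<in> tcarrier N \<Longrightarrow> tmul N X Y \<in> tcarrier N"
  by (elim tcarrierE) (simp add: tmul_tcls)

lemma lmul_tcls: "f \<in> fs \<Longrightarrow> g \<in> fs \<Longrightarrow> lmul N (tcls N f) (tcls N g) = tcls N (conv f g)"
  by (simp add: lmul_def tmul_tcls)

lemma lmul_extensional [simp]: "lmul N \<xi> \<in> extensional (tcarrier N)"
  by (simp add: lmul_def)

lemma lmul_in_lin_end:
  assumes "\<xi> \<in> tcarrier N"
  shows "lmul N \<xi> \<in> lin_end N"
proof -
  from assms obtain f where f: "f \<in> fs" "\<xi> = tcls N f" by (rule tcarrierE)
  have "lmul N \<xi> \<in> tcarrier N \<rightarrow>\<^sub>E tcarrier N"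
    using assms by (simp add: lmul_def tmul_in_tcarrier)
  moreover have "lmul N \<xi> (tadd N X Y) = tadd N (lmul N \<xi> X) (lmul N \<xi> Y)"
    if "X \<in> tcarrier N" "Y \<in> tcarrier N" for X Y
    using that f by (auto elim!: tcarrierE simp: tadd_tcls lmul_tcls conv_fadd_right)
  moreover have "lmul N \<xi> (tsc N c X) = tsc N c (lmul N \<xi> X)" if "X \<in> tcarrier N" for X c
    using that f by (auto elim!: tcarrierE simp: tsc_tcls lmul_tcls conv_fsmul_right)
  ultimately show ?thesis by (simp add: lin_end_def)
qed

lemma lmul_tadd:
  "\<xi> \<in> tcarrier N \<Longrightarrow> \<eta> \<in> tcarrier N \<Longrightarrow>
    lmul N (tadd N \<xi> \<eta>) = (\<lambda>X\<in>tcarrier N. tadd N (lmul N \<xi> X) (lmul N \<eta> X))"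
  by (elim tcarrierE, rule tcarrier_fun_eqI) (simp_all add: tadd_tcls lmul_tcls conv_fadd_left)

lemma lmul_tsc:
  "\<xi> \<in> tcarrier N \<Longrightarrow> lmul N (tsc N c \<xi>) = (\<lambda>X\<in>tcarrier N. tsc N c (lmul N \<xi> X))"
  by (elim tcarrierE, rule tcarrier_fun_eqI) (simp_all add: tsc_tcls lmul_tcls conv_fsmul_left)

lemma lmul_tmul:
  "\<xi> \<in> tcarrier N \<Longrightarrow> \<eta> \<in> tcarrier N \<Longrightarrow>
    lmul N (tmul N \<xi> \<eta>) = compose (tcarrier N) (lmul N \<xi>) (lmul N \<eta>)"
  by (elim tcarrierE, rule tcarrier_fun_eqI)
    (simp_all add: compose_def tmul_tcls lmul_tcls conv_assoc)

lemma tone_in_tcarrier [simp]: "tone N \<in> tcarrier N"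
  by (simp add: tone_def)

lemma lmul_tone: "lmul N (tone N) = (\<lambda>X\<in>tcarrier N. X)"
  by (rule tcarrier_fun_eqI) (simp_all add: tone_def lmul_tcls conv_unit_left)

lemma inj_on_lmul: "inj_on (lmul N) (tcarrier N)"
proof (rule inj_onI)
  fix \<xi> \<eta> assume "\<xi> \<in> tcarrier N" "\<eta> \<in> tcarrier N" "lmul N \<xi> = lmul N \<eta>"
  then have "lmul N \<xi> (tone N) = lmul N \<eta> (tone N)" by simp
  with \<open>\<xi> \<in> tcarrier N\<close> \<open>\<eta> \<in> tcarrier N\<close> show "\<xi> = \<eta>"
    by (elim tcarrierE) (simp add: tone_def lmul_tcls conv_unit_right)
qed

lemma tcls_push_rep:
  assumes "g \<in> fs"
  shows "tcls N (push (pair_mult a) (rep (tcls N g))) = lmul N (tcls N (dlt a)) (tcls N g)"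
proof -
  have "tcls N (push (pair_mult a) (rep (tcls N g))) = tcls N (conv (dlt a) (rep (tcls N g)))"
    using assms by (simp add: push_eq_conv rep_tcls)
  also have "\<dots> = lmul N (tcls N (dlt a)) (tcls N (rep (tcls N g)))"
    using assms by (simp add: lmul_tcls rep_tcls)
  finally show ?thesis using assms by (simp add: tcls_rep)
qed

lemma actL_eq_lmul: "actL N d = lmul N (tcls N (dlt (d, 1)))"
  by (rule tcarrier_fun_eqI)
    (simp_all add: actL_def case_prod_beta' flip: tcls_push_rep)

lemma actR_eq_lmul: "actR N e = lmul N (tcls N (dlt (1, e)))"
  by (rule tcarrier_fun_eqI)
    (simp_all add: actR_def case_prod_beta' flip: tcls_push_rep)

lemma lmul_in_gen_subalg:
  assumes "f \<in> fs"
  shows "lmul N (tcls N f) \<in> gen_subalg N (range (actL N) \<union> range (actR N))"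
  using assms
proof (induction rule: fs_induct)
  case zero
  have "tcls N (\<lambda>_. 0) = tsc N 0 (tone N)"
    by (simp add: tone_def tsc_tcls fsmul_def)
  then have "lmul N (tcls N (\<lambda>_. 0)) = (\<lambda>X\<in>tcarrier N. tsc N 0 ((\<lambda>X\<in>tcarrier N. X) X))"
    by (simp only: lmul_tsc tone_in_tcarrier lmul_tone)
  then show ?case by (simp only: gen_subalg.one gen_subalg.scale)
next
  case (step f a c)
  obtain d e where a: "a = (d, e)" by force
  have "tcls N (dlt a) = tmul N (tcls N (dlt (d, 1))) (tcls N (dlt (1, e)))"
    by (simp add: a tmul_tcls)
  then have "lmul N (tcls N (dlt a)) = compose (tcarrier N) (actL N d) (actR N e)"
    by (simp add: lmul_tmul actL_eq_lmul actR_eq_lmul)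
  then have gen:
      "lmul N (tcls N (fsmul c (dlt a))) \<in> gen_subalg N (range (actL N) \<union> range (actR N))"
    by (simp add: flip: tsc_tcls)
      (simp add: lmul_tsc gen_subalg.scale gen_subalg.mult gen_subalg.base)
  have "lmul N (tcls N (fadd f (fsmul c (dlt a)))) =
      (\<lambda>X\<in>tcarrier N. tadd N (lmul N (tcls N f) X) (lmul N (tcls N (fsmul c (dlt a))) X))"
    using step by (simp add: lmul_tadd flip: tadd_tcls)
  then show ?case by (simp only: gen_subalg.add[OF step.IH gen])
qed

lemma lmul_image_eq_gen_subalg:
  "lmul N ` tcarrier N = gen_subalg N (range (actL N) \<union> range (actR N))"
proof
  show "lmul N ` tcarrier N \<subseteq> gen_subalg N (range (actL N) \<union> range (actR N))"
    by (auto elim!: tcarrierE intro: lmul_in_gen_subalg)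
next
  show "gen_subalg N (range (actL N) \<union> range (actR N)) \<subseteq> lmul N ` tcarrier N"
  proof
    fix \<phi> assume "\<phi> \<in> gen_subalg N (range (actL N) \<union> range (actR N))"
    then show "\<phi> \<in> lmul N ` tcarrier N"
    proof induction
      case (base \<phi>)
      then show ?case by (auto simp: actL_eq_lmul actR_eq_lmul)
    next
      case one
      show ?case by (rule rev_image_eqI[OF tone_in_tcarrier]) (simp add: lmul_tone)
    next
      case (add \<phi> \<psi>)
      then obtain \<xi> \<eta> where "\<xi> \<in> tcarrier N" "\<eta> \<in> tcarrier N" "\<phi> = lmul N \<xi>" "\<psi> = lmul N \<eta>"
        by blast
      then show ?case
        by (intro rev_image_eqI[of "tadd N \<xi> \<eta>"]) (simp_all add: lmul_tadd tadd_in_tcarrier)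
    next
      case (scale \<phi> c)
      then obtain \<xi> where "\<xi> \<in> tcarrier N" "\<phi> = lmul N \<xi>" by blast
      then show ?case
        by (intro rev_image_eqI[of "tsc N c \<xi>"]) (simp_all add: lmul_tsc tsc_in_tcarrier)
    next
      case (mult \<phi> \<psi>)
      then obtain \<xi> \<eta> where "\<xi> \<in> tcarrier N" "\<eta> \<in> tcarrier N" "\<phi> = lmul N \<xi>" "\<psi> = lmul N \<eta>"
        by blast
      then show ?case
        by (intro rev_image_eqI[of "tmul N \<xi> \<eta>"]) (simp_all add: lmul_tmul tmul_in_tcarrier)
    qed
  qed
qed

end

section \<open>The balanced tensor product\<close>

lemma kalg_scale_mult_left: "kalg s \<Longrightarrow> s c (x * y) = s c x * y"
  unfolding kalg_def by blast

lemma kalg_scale_mult_right: "kalg s \<Longrightarrow> s c (x * y) = x * s c y"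
  unfolding kalg_def by blast

lemma range_center_commute: "range f \<subseteq> center \<Longrightarrow> f b * x = x * f b"
  by (auto simp: center_def)

lemma tens_rel_fs: "r \<in> tens_rel sD sE aB bB \<Longrightarrow> r \<in> fs"
  by (induction rule: tens_rel.induct) simp_all

lemma fs_subspace_tens_null: "fs_subspace (tens_null sD sE aB bB)"
proof
  show "(\<lambda>_. 0) \<in> tens_null sD sE aB bB" by (rule tens_null.zero)
next
  fix n m assume "n \<in> tens_null sD sE aB bB" "m \<in> tens_null sD sE aB bB"
  then show "fadd n m \<in> tens_null sD sE aB bB"
  proof (induction rule: tens_null.induct)
    case zero then show ?case by (simp add: fadd_def)
  next
    case (step r f c)
    have "fadd (fadd (fsmul c r) f) m = fadd (fsmul c r) (fadd f m)"
      by (simp add: fadd_def add.assoc)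
    then show ?case using step by (simp add: tens_null.step)
  qed
next
  fix n c assume "n \<in> tens_null sD sE aB bB"
  then show "fsmul c n \<in> tens_null sD sE aB bB"
  proof (induction rule: tens_null.induct)
    case zero then show ?case by (simp add: fsmul_def tens_null.zero)
  next
    case (step r f c')
    have "fsmul c (fadd (fsmul c' r) f) = fadd (fsmul (c * c') r) (fsmul c f)"
      by (simp add: fadd_def fsmul_def distrib_left mult.assoc)
    then show ?case using step by (simp add: tens_null.step)
  qed
qed

lemma tens_null_fs: "n \<in> tens_null sD sE aB bB \<Longrightarrow> n \<in> fs"
  by (induction rule: tens_null.induct) (simp_all add: tens_rel_fs)

lemma tens_rel_in_tens_null: "r \<in> tens_rel sD sE aB bB \<Longrightarrow> r \<in> tens_null sD sE aB bB"
proof -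
  assume "r \<in> tens_rel sD sE aB bB"
  then have "fadd (fsmul 1 r) (\<lambda>_. 0) \<in> tens_null sD sE aB bB"
    by (rule tens_null.step) (rule tens_null.zero)
  then show "r \<in> tens_null sD sE aB bB" by (simp add: fadd_def fsmul_def)
qed

lemma tens_rel_conv_dlt:
  assumes "kalg sD" "kalg sE" "range aB \<subseteq> center" "r \<in> tens_rel sD sE aB bB"
  shows "conv r (dlt (a1, a2)) \<in> tens_rel sD sE aB bB"
  using assms(4)
proof cases
  case (ladd d d' e)
  then have "conv r (dlt (a1, a2)) =
      fdiff (dlt (d * a1 + d' * a1, e * a2)) (fadd (dlt (d * a1, e * a2)) (dlt (d' * a1, e * a2)))"
    by (simp add: conv_fdiff_left conv_fadd_left distrib_right)
  then show ?thesis by (simp only: tens_rel.ladd)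
next
  case (radd d e e')
  then have "conv r (dlt (a1, a2)) =
      fdiff (dlt (d * a1, e * a2 + e' * a2)) (fadd (dlt (d * a1, e * a2)) (dlt (d * a1, e' * a2)))"
    by (simp add: conv_fdiff_left conv_fadd_left distrib_right)
  then show ?thesis by (simp only: tens_rel.radd)
next
  case (lsc c d e)
  then have "conv r (dlt (a1, a2)) =
      fdiff (dlt (sD c (d * a1), e * a2)) (fsmul c (dlt (d * a1, e * a2)))"
    using assms(1) by (simp add: conv_fdiff_left conv_fsmul_left kalg_scale_mult_left)
  then show ?thesis by (simp only: tens_rel.lsc)
next
  case (rsc d c e)
  then have "conv r (dlt (a1, a2)) =
      fdiff (dlt (d * a1, sE c (e * a2))) (fsmul c (dlt (d * a1, e * a2)))"
    using assms(2) by (simp add: conv_fdiff_left conv_fsmul_left kalg_scale_mult_left)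
  then show ?thesis by (simp only: tens_rel.rsc)
next
  case (bal d b e)
  have "d * aB b * a1 = d * a1 * aB b"
    using range_center_commute[OF assms(3)] by (simp add: mult.assoc)
  with bal have "conv r (dlt (a1, a2)) =
      fdiff (dlt (d * a1 * aB b, e * a2)) (dlt (d * a1, bB b * (e * a2)))"
    by (simp add: conv_fdiff_left mult.assoc)
  then show ?thesis by (simp only: tens_rel.bal)
qed

lemma dlt_conv_tens_rel:
  assumes "kalg sD" "kalg sE" "range bB \<subseteq> center" "r \<in> tens_rel sD sE aB bB"
  shows "conv (dlt (a1, a2)) r \<in> tens_rel sD sE aB bB"
  using assms(4)
proof cases
  case (ladd d d' e)
  then have "conv (dlt (a1, a2)) r =
      fdiff (dlt (a1 * d + a1 * d', a2 * e)) (fadd (dlt (a1 * d, a2 * e)) (dlt (a1 * d', a2 * e)))"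
    by (simp add: conv_fdiff_right conv_fadd_right distrib_left)
  then show ?thesis by (simp only: tens_rel.ladd)
next
  case (radd d e e')
  then have "conv (dlt (a1, a2)) r =
      fdiff (dlt (a1 * d, a2 * e + a2 * e')) (fadd (dlt (a1 * d, a2 * e)) (dlt (a1 * d, a2 * e')))"
    by (simp add: conv_fdiff_right conv_fadd_right distrib_left)
  then show ?thesis by (simp only: tens_rel.radd)
next
  case (lsc c d e)
  then have "conv (dlt (a1, a2)) r =
      fdiff (dlt (sD c (a1 * d), a2 * e)) (fsmul c (dlt (a1 * d, a2 * e)))"
    using assms(1) by (simp add: conv_fdiff_right conv_fsmul_right kalg_scale_mult_right)
  then show ?thesis by (simp only: tens_rel.lsc)
next
  case (rsc d c e)
  then have "conv (dlt (a1, a2)) r =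
      fdiff (dlt (a1 * d, sE c (a2 * e))) (fsmul c (dlt (a1 * d, a2 * e)))"
    using assms(2) by (simp add: conv_fdiff_right conv_fsmul_right kalg_scale_mult_right)
  then show ?thesis by (simp only: tens_rel.rsc)
next
  case (bal d b e)
  have "a2 * (bB b * e) = bB b * (a2 * e)"
    using range_center_commute[OF assms(3)] by (metis mult.assoc)
  with bal have "conv (dlt (a1, a2)) r =
      fdiff (dlt (a1 * d * aB b, a2 * e)) (dlt (a1 * d, bB b * (a2 * e)))"
    by (simp add: conv_fdiff_right mult.assoc)
  then show ?thesis by (simp only: tens_rel.bal)
qed

lemma tens_null_conv_right:
  assumes "kalg sD" "kalg sE" "range aB \<subseteq> center"
    and "n \<in> tens_null sD sE aB bB" "g \<in> fs"
  shows "conv n g \<in> tens_null sD sE aB bB"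
proof -
  interpret fs_subspace "tens_null sD sE aB bB" by (rule fs_subspace_tens_null)
  have rel: "conv r g \<in> tens_null sD sE aB bB" if r: "r \<in> tens_rel sD sE aB bB" for r
    using assms(5)
  proof (induction rule: fs_induct)
    case zero then show ?case by (simp add: zero_mem)
  next
    case (step f a c)
    from tens_rel_conv_dlt[OF assms(1-3) r, of "fst a" "snd a"]
    have "conv r (dlt a) \<in> tens_null sD sE aB bB" by (simp add: tens_rel_in_tens_null)
    then show ?case
      using step tens_rel_fs[OF r] by (simp add: conv_bilinear fadd_mem fsmul_mem)
  qed
  from assms(4) show ?thesis
  proof (induction rule: tens_null.induct)
    case zero then show ?case by (simp add: zero_mem)
  next
    case (step r f c)
    have "r \<in> fs" "f \<in> fs" using step.hyps by (simp_all add: tens_rel_fs tens_null_fs)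
    with assms(5) have "conv (fadd (fsmul c r) f) g = fadd (fsmul c (conv r g)) (conv f g)"
      by (simp add: conv_bilinear)
    then show ?case using rel[OF step.hyps(1)] step.IH by (simp add: fadd_mem fsmul_mem)
  qed
qed

lemma tens_null_conv_left:
  assumes "kalg sD" "kalg sE" "range bB \<subseteq> center"
    and "n \<in> tens_null sD sE aB bB" "g \<in> fs"
  shows "conv g n \<in> tens_null sD sE aB bB"
proof -
  interpret fs_subspace "tens_null sD sE aB bB" by (rule fs_subspace_tens_null)
  have rel: "conv g r \<in> tens_null sD sE aB bB" if r: "r \<in> tens_rel sD sE aB bB" for r
    using assms(5)
  proof (induction rule: fs_induct)
    case zero then show ?case by (simp add: zero_mem)
  next
    case (step f a c)
    from dlt_conv_tens_rel[OF assms(1-3) r, of "fst a" "snd a"]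
    have "conv (dlt a) r \<in> tens_null sD sE aB bB" by (simp add: tens_rel_in_tens_null)
    then show ?case
      using step tens_rel_fs[OF r] by (simp add: conv_bilinear fadd_mem fsmul_mem)
  qed
  from assms(4) show ?thesis
  proof (induction rule: tens_null.induct)
    case zero then show ?case by (simp add: zero_mem)
  next
    case (step r f c)
    have "r \<in> fs" "f \<in> fs" using step.hyps by (simp_all add: tens_rel_fs tens_null_fs)
    with assms(5) have "conv g (fadd (fsmul c r) f) = fadd (fsmul c (conv g r)) (conv g f)"
      by (simp add: conv_bilinear)
    then show ?case using rel[OF step.hyps(1)] step.IH by (simp add: fadd_mem fsmul_mem)
  qed
qed

lemma conv_ideal_tens_null:
  assumes "kalg sD" "kalg sE" "range aB \<subseteq> center" "range bB \<subseteq> center"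
  shows "conv_ideal (tens_null sD sE aB bB)"
  using assms by (intro conv_ideal.intro conv_ideal_axioms.intro fs_subspace_tens_null)
    (simp_all add: tens_null_conv_left tens_null_conv_right)

lemma fusion_eq_gen_subalg:
  assumes "range aB \<subseteq> center" "range bB \<subseteq> center"
  shows "fusion sD sE aB bB = (let N = tens_null sD sE aB bB in
    gen_subalg N (range (actL N) \<union> range (actR N)))"
proof -
  have "{d. \<forall>b. d * aB b = aB b * d} = UNIV" "{e. \<forall>b. bB b * e = e * bB b} = UNIV"
    using range_center_commute[OF assms(1)] range_center_commute[OF assms(2)] by auto
  then show ?thesis by (simp add: fusion_def)
qed

theorem mainTheorem3:
  fixes sA :: "'k::field \<Rightarrow> 'a::comm_ring_1 \<Rightarrow> 'a"
    and sB :: "'k \<Rightarrow> 'b::comm_ring_1 \<Rightarrow> 'b"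
    and sC :: "'k \<Rightarrow> 'c::comm_ring_1 \<Rightarrow> 'c"
    and sD :: "'k \<Rightarrow> 'd::ring_1 \<Rightarrow> 'd"
    and sE :: "'k \<Rightarrow> 'e::ring_1 \<Rightarrow> 'e"
    and \<alpha>A :: "'a \<Rightarrow> 'd" and \<alpha>B :: "'b \<Rightarrow> 'd"
    and \<beta>B :: "'b \<Rightarrow> 'e" and \<beta>C :: "'c \<Rightarrow> 'e"
  assumes "kalg sA" "kalg sB" "kalg sC" "kalg sD" "kalg sE"
    and "alg_hom sA sD \<alpha>A" "range \<alpha>A \<subseteq> center"
    and "alg_hom sB sD \<alpha>B" "range \<alpha>B \<subseteq> center"
    and "alg_hom sB sE \<beta>B" "range \<beta>B \<subseteq> center"
    and "alg_hom sC sE \<beta>C" "range \<beta>C \<subseteq> center"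
  shows "let N = tens_null sD sE \<alpha>B \<beta>B; T = tcarrier N in
     (\<forall>\<xi>\<in>T. lmul N \<xi> \<in> lin_end N) \<and>
     (\<forall>\<xi>\<in>T. \<forall>\<eta>\<in>T. lmul N (tadd N \<xi> \<eta>) = (\<lambda>X\<in>T. tadd N (lmul N \<xi> X) (lmul N \<eta> X))) \<and>
     (\<forall>c. \<forall>\<xi>\<in>T. lmul N (tsc N c \<xi>) = (\<lambda>X\<in>T. tsc N c (lmul N \<xi> X))) \<and>
     (\<forall>\<xi>\<in>T. \<forall>\<eta>\<in>T. lmul N (tmul N \<xi> \<eta>) = compose T (lmul N \<xi>) (lmul N \<eta>)) \<and>
     lmul N (tone N) = (\<lambda>X\<in>T. X) \<and>
     inj_on (lmul N) T \<and>
     lmul N ` T = fusion sD sE \<alpha>B \<beta>B"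
proof -
  interpret conv_ideal "tens_null sD sE \<alpha>B \<beta>B"
    using assms(4,5,9,11) by (rule conv_ideal_tens_null)
  show ?thesis
    using assms(9,11)
    by (simp add: Let_def lmul_in_lin_end lmul_tadd lmul_tsc lmul_tmul lmul_tone inj_on_lmul
        lmul_image_eq_gen_subalg fusion_eq_gen_subalg)
qed

end
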